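(* For every observed law $\mathcal{P}$ of $(Y,D,Z)$ we have $U(\mathcal{P})=-L(\bar{\mathcal{P}})$, where $\bar{\mathcal{P}}$ is the law defined by $\bar{\mathcal{P}}(Y=y,D=d,Z=z)=\mathcal{P}(Y=y,D=1-d,Z=z)$ for all $y,d,z$.
   Context: Instrumental variable (IV) setting: $D\in\{0,1\}$ is a treatment, $Y$ an outcome taking values in a finite set $\{\gamma_0<\gamma_1<\dots<\gamma_{n-1}\}\subset\mathbb{R}$, and $Z$ an instrument taking values in $[\ell]:=\{0,\dots,\ell-1\}$. For $d\in\{0,1\}$, $z\in[\ell]$, $Y^{(d,z)}$ denotes the potential outcome of $Y$ under $D=d,Z=z$, and $D^{(z)}$ the potential treatment under $Z=z$. The IV model consists of: (Exclusion) $Y^{(d,z)}=Y^{(d,z')}$ a.s. for all $z,z'\in[\ell]$, $d\in\{0,1\}$, so one writes $Y^{(d)}$; (Random assignment) $Z$ is independent of $(Y^{(0)},Y^{(1)},D^{(0)},\dots,D^{(\ell-1)})$; (Consistency) $Y=(1-D)Y^{(0)}+DY^{(1)}$ and $D=\sum_{z\in[\ell]}\mathbb{1}(Z=z)D^{(z)}$. A full data law is a joint law of $(Y^{(0)},Y^{(1)},D^{(0)},\dots,D^{(\ell-1)},Z)$; it induces an observed law of $(Y,D,Z)$ via consistency. The average treatment effect is $\mathrm{ATE}=\mathbb{E}[Y^{(1)}-Y^{(0)}]$. For an observed law $\mathcal{P}$, $L(\mathcal{P})$ and $U(\mathcal{P})$ denote the infimum and supremum of ATE over all full data laws satisfying exclusion,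 random assignment and consistency that induce $\mathcal{P}$ (with $\inf\emptyset=+\infty$, $\sup\emptyset=-\infty$). *)

theory Defs
  imports "HOL-Probability.Probability"
begin

text \<open>A full data law is a pmf on tuples (Y0, Y1, Ds, Z), where Ds is the list
  of potential treatments D(0),...,D(l-1) (D = 1 encoded as True) and exclusion
  is built in by indexing potential outcomes by d only.\<close>

type_synonym full_data = "real \<times> real \<times> bool list \<times> nat"
type_synonym obs_data = "real \<times> bool \<times> nat"

definition full_support :: "real set \<Rightarrow> nat \<Rightarrow> full_data pmf \<Rightarrow> bool" where
  "full_support \<Gamma> l Q \<longleftrightarrow>
     set_pmf Q \<subseteq> {(y0, y1, ds, z). y0 \<in> \<Gamma> \<and> y1 \<in> \<Gamma> \<and> length ds = l \<and> z < l}"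

definition random_assignment :: "full_data pmf \<Rightarrow> bool" where
  "random_assignment Q \<longleftrightarrow>
     (\<forall>A B. measure_pmf.prob Q {(y0, y1, ds, z). (y0, y1, ds) \<in> A \<and> z \<in> B} =
            measure_pmf.prob Q {(y0, y1, ds, z). (y0, y1, ds) \<in> A} *
            measure_pmf.prob Q {(y0, y1, ds, z). z \<in> B})"

definition observe :: "full_data pmf \<Rightarrow> obs_data pmf" where
  "observe Q = map_pmf (\<lambda>(y0, y1, ds, z). (if ds ! z then y1 else y0, ds ! z, z)) Q"

definition ATE :: "full_data pmf \<Rightarrow> real" where
  "ATE Q = measure_pmf.expectation Q (\<lambda>(y0, y1, ds, z). y1 - y0)"

definition compatible :: "real set \<Rightarrow> nat \<Rightarrow> obs_data pmf \<Rightarrow> full_data pmf set" where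
  "compatible \<Gamma> l P = {Q. full_support \<Gamma> l Q \<and> random_assignment Q \<and> observe Q = P}"

text \<open>In ereal, Inf {} = \<infinity> and Sup {} = -\<infinity>, matching the paper's conventions.\<close>
definition L_bound :: "real set \<Rightarrow> nat \<Rightarrow> obs_data pmf \<Rightarrow> ereal" where
  "L_bound \<Gamma> l P = (INF Q \<in> compatible \<Gamma> l P. ereal (ATE Q))"

definition U_bound :: "real set \<Rightarrow> nat \<Rightarrow> obs_data pmf \<Rightarrow> ereal" where
  "U_bound \<Gamma> l P = (SUP Q \<in> compatible \<Gamma> l P. ereal (ATE Q))"

definition flip_treatment :: "obs_data pmf \<Rightarrow> obs_data pmf" where
  "flip_treatment P = map_pmf (\<lambda>(y, d, z). (y, \<not> d, z)) P"

end

theory Submission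
  imports Defs
begin

text \<open>Relabelling the treatment arms, i.e. exchanging the potential outcomes
  and negating every potential treatment, is an involution on full data laws.
  It preserves the support condition and random assignment, turns the observed
  law into its treatment-flipped version and negates the ATE. Hence it maps the
  laws compatible with \<open>P\<close> bijectively onto those compatible with the flipped
  law, and the supremum of the ATE over the former is minus the infimum over the
  latter.\<close>

definition swap_arms :: "full_data \<Rightarrow> full_data" where
  "swap_arms = (\<lambda>(y0, y1, ds, z). (y1, y0, map Not ds, z))"

lemma swap_arms_swap_arms [simp]: "swap_arms (swap_arms x) = x"
  by (cases x) (simp add: swap_arms_def comp_def)

lemma map_pmf_swap_arms_swap_arms [simp]: "map_pmf swap_arms (map_pmf swap_arms Q) = Q"
  by (simp add: pmf.map_comp comp_def)

lemma flip_treatment_flip_treatment [simp]: "flip_treatment (flip_treatment P) = P"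
  by (simp add: flip_treatment_def pmf.map_comp comp_def split_beta)

lemma full_support_swap_arms:
  "full_support \<Gamma> l Q \<Longrightarrow> full_support \<Gamma> l (map_pmf swap_arms Q)"
  unfolding full_support_def swap_arms_def by auto

lemma random_assignment_swap_arms:
  assumes "random_assignment Q"
  shows "random_assignment (map_pmf swap_arms Q)"
  unfolding random_assignment_def
proof (intro allI)
  fix A :: "(real \<times> real \<times> bool list) set" and B :: "nat set"
  define A' where "A' = {(y0, y1, ds). (y1, y0, map Not ds) \<in> A}"
  have "swap_arms -` {(y0, y1, ds, z). (y0, y1, ds) \<in> A \<and> z \<in> B} =
      {(y0, y1, ds, z). (y0, y1, ds) \<in> A' \<and> z \<in> B}"
    and "swap_arms -` {(y0, y1, ds, z). (y0, y1, ds) \<in> A} = {(y0, y1, ds, z). (y0, y1, ds) \<in> A'}"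
    and "swap_arms -` {(y0, y1, ds, z). z \<in> B} = {(y0, y1, ds, z). z \<in> B}"
    by (auto simp: swap_arms_def A'_def)
  with assms show "measure_pmf.prob (map_pmf swap_arms Q) {(y0, y1, ds, z). (y0, y1, ds) \<in> A \<and> z \<in> B} =
      measure_pmf.prob (map_pmf swap_arms Q) {(y0, y1, ds, z). (y0, y1, ds) \<in> A} *
      measure_pmf.prob (map_pmf swap_arms Q) {(y0, y1, ds, z). z \<in> B}"
    unfolding random_assignment_def measure_map_pmf by presburger
qed

text \<open>The support condition is needed: outside \<open>z < length ds\<close> the term
  \<open>ds ! z\<close> is unspecified, and \<open>map Not ds ! z\<close> need not be its negation.\<close>

lemma observe_swap_arms:
  assumes "full_support \<Gamma> l Q"
  shows "observe (map_pmf swap_arms Q) = flip_treatment (observe Q)"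
  unfolding observe_def flip_treatment_def pmf.map_comp
proof (rule map_pmf_cong[OF refl])
  fix x assume "x \<in> set_pmf Q"
  with assms obtain y0 y1 ds z where "x = (y0, y1, ds, z)" and "z < length ds"
    unfolding full_support_def by (cases x) auto
  then show "((\<lambda>(y0, y1, ds, z). (if ds ! z then y1 else y0, ds ! z, z)) \<circ> swap_arms) x =
      ((\<lambda>(y, d, z). (y, \<not> d, z)) \<circ> (\<lambda>(y0, y1, ds, z). (if ds ! z then y1 else y0, ds ! z, z))) x"
    by (simp add: swap_arms_def)
qed

lemma ATE_swap_arms: "ATE (map_pmf swap_arms Q) = - ATE Q"
proof -
  have "ATE (map_pmf swap_arms Q) = measure_pmf.expectation Q (\<lambda>x. - (case x of (y0, y1, ds, z) \<Rightarrow> y1 - y0))"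
    unfolding ATE_def by (simp add: swap_arms_def split_beta)
  also have "\<dots> = - ATE Q"
    unfolding ATE_def by (rule integral_minus)
  finally show ?thesis .
qed

lemma swap_arms_in_compatible:
  "Q \<in> compatible \<Gamma> l P \<Longrightarrow> map_pmf swap_arms Q \<in> compatible \<Gamma> l (flip_treatment P)"
  unfolding compatible_def
  using full_support_swap_arms random_assignment_swap_arms observe_swap_arms by auto

lemma compatible_flip_treatment:
  "compatible \<Gamma> l (flip_treatment P) = map_pmf swap_arms ` compatible \<Gamma> l P"
proof
  show "map_pmf swap_arms ` compatible \<Gamma> l P \<subseteq> compatible \<Gamma> l (flip_treatment P)"
    using swap_arms_in_compatible by blast
  show "compatible \<Gamma> l (flip_treatment P) \<subseteq> map_pmf swap_arms ` compatible \<Gamma> l P"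
  proof
    fix Q assume "Q \<in> compatible \<Gamma> l (flip_treatment P)"
    then have "map_pmf swap_arms Q \<in> compatible \<Gamma> l P"
      using swap_arms_in_compatible[of Q \<Gamma> l "flip_treatment P"] by simp
    then show "Q \<in> map_pmf swap_arms ` compatible \<Gamma> l P"
      by (metis image_eqI map_pmf_swap_arms_swap_arms)
  qed
qed

lemma L_bound_flip_treatment: "L_bound \<Gamma> l (flip_treatment P) = - U_bound \<Gamma> l P"
proof -
  have "L_bound \<Gamma> l (flip_treatment P) = (INF Q \<in> compatible \<Gamma> l P. - ereal (ATE Q))"
    unfolding L_bound_def compatible_flip_treatment image_image by (simp add: ATE_swap_arms)
  also have "\<dots> = - U_bound \<Gamma> l P"
    unfolding U_bound_def by (rule ereal_INF_uminus_eq)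
  finally show ?thesis .
qed

theorem proposition1:
  fixes \<Gamma> :: "real set" and l :: nat and P :: "obs_data pmf"
  assumes "finite \<Gamma>" and "\<Gamma> \<noteq> {}" and "l > 0"
    and "set_pmf P \<subseteq> \<Gamma> \<times> UNIV \<times> {..<l}"
  shows "U_bound \<Gamma> l P = - L_bound \<Gamma> l (flip_treatment P)"
  by (simp add: L_bound_flip_treatment)

end
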